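(* Let $v_{1,1},v_{2,1},w_{1,1},w_{2,1}\in\mathbb R$ satisfy $w_{i,1}>0$, $4v_{i,1}+w_{i,1}>0$ ($i=1,2$), $v_{1,1}v_{2,1}>0$ and $c_2>c_1$, where $c_i:=2v_{i,1}+w_{i,1}$. Then for every $\vartheta\in(-\pi,\pi]$ one has $2\omega_+(\vartheta)\neq\omega_-(2\vartheta)$ and $2\omega_+(\vartheta)\neq\omega_+(2\vartheta)$.
   Context: For $\vartheta\in\mathbb R$ define $$\omega_\pm(\vartheta):=\sqrt{\tfrac12\Big(c_1+c_2\pm\sqrt{(c_1-c_2)^2+8v_{1,1}v_{2,1}(\cos\vartheta+1)}\Big)},$$ which are well defined and positive under the stated assumptions (these are the optical ($+$) and acoustical ($-$) branches of the dispersion relation $\det H(\omega,\vartheta)=0$, $H(\omega,\vartheta)=\begin{pmatrix}\omega^2-c_1 & v_{1,1}(e^{i\vartheta}+1)\\ v_{2,1}(1+e^{-i\vartheta}) & \omega^2-c_2\end{pmatrix}$, of the linearized diatomic chain). *)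

theory Defs
  imports Complex_Main
begin

text \<open>Optical (+) and acoustical (-) branches of the dispersion relation of the
linearized diatomic chain, with c1 = 2 v11 + w11 and c2 = 2 v21 + w21.\<close>

definition chain_c :: "real \<Rightarrow> real \<Rightarrow> real" where
  "chain_c v w = 2 * v + w"

definition omega_plus :: "real \<Rightarrow> real \<Rightarrow> real \<Rightarrow> real \<Rightarrow> real \<Rightarrow> real" where
  "omega_plus v11 v21 w11 w21 \<theta> =
     (let c1 = chain_c v11 w11; c2 = chain_c v21 w21 in
      sqrt ((c1 + c2 + sqrt ((c1 - c2)^2 + 8 * v11 * v21 * (cos \<theta> + 1))) / 2))"

definition omega_minus :: "real \<Rightarrow> real \<Rightarrow> real \<Rightarrow> real \<Rightarrow> real \<Rightarrow> real" where
  "omega_minus v11 v21 w11 w21 \<theta> =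
     (let c1 = chain_c v11 w11; c2 = chain_c v21 w21 in
      sqrt ((c1 + c2 - sqrt ((c1 - c2)^2 + 8 * v11 * v21 * (cos \<theta> + 1))) / 2))"

end

theory Submission
  imports Defs
begin

(* Write c1, c2 for the stiffness constants and
   s(x) = sqrt ((c1 - c2)^2 + 8 v11 v21 (cos x + 1)) for the root of the
   discriminant.  Under the hypotheses c_i > 2|v_i1| and v11 v21 > 0 one has
   |c1 - c2| <= s(x) < c1 + c2 for every x.  Hence
     omega_+(x)^2 = (c1 + c2 + s(x)) / 2 >= max c1 c2,
     omega_-(x)^2 <= omega_+(x)^2 < c1 + c2.
   With c1 < c2 this gives, for any two angles,
     2 omega_+(theta) >= 2 sqrt c2 = sqrt (4 c2) > sqrt (c1 + c2) > omega_pm(2 theta),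
   so the resonance conditions 2 omega_+(theta) = omega_pm(2 theta) never hold. *)

lemma chain_c_gt_abs:
  fixes v w :: real
  assumes "w > 0" and "4 * v + w > 0"
  shows "chain_c v w > 2 * \<bar>v\<bar>"
  using assms unfolding chain_c_def by linarith

text \<open>Two-sided bound on the root of the discriminant: the coupling term
  8 p (cos x + 1) lies in [0, 16 p], and 16 p < 4 c1 c2 keeps it below (c1 + c2)^2.\<close>

lemma discriminant_root_bounds:
  fixes c1 c2 p x :: real
  assumes "0 \<le> p" and "4 * p < c1 * c2" and "0 \<le> c1 + c2"
  shows "\<bar>c1 - c2\<bar> \<le> sqrt ((c1 - c2)^2 + 8 * p * (cos x + 1))"
    and "sqrt ((c1 - c2)^2 + 8 * p * (cos x + 1)) < c1 + c2"
proof -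
  have cos_range: "0 \<le> cos x + 1" "cos x + 1 \<le> 2"
    using cos_ge_minus_one[of x] cos_le_one[of x] by linarith+
  have coupling_nonneg: "0 \<le> 8 * p * (cos x + 1)"
    using assms(1) cos_range by simp
  have "8 * p * (cos x + 1) \<le> 16 * p"
    using assms(1) cos_range mult_left_mono[of "cos x + 1" 2 "8 * p"] by simp
  hence disc_less: "(c1 - c2)^2 + 8 * p * (cos x + 1) < (c1 + c2)^2"
    using assms(2) by (simp add: power2_eq_square algebra_simps)
  show "\<bar>c1 - c2\<bar> \<le> sqrt ((c1 - c2)^2 + 8 * p * (cos x + 1))"
    using real_sqrt_le_mono[of "(c1 - c2)^2"] coupling_nonneg by simp
  show "sqrt ((c1 - c2)^2 + 8 * p * (cos x + 1)) < c1 + c2"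
    using real_sqrt_less_mono[OF disc_less] assms(3) by simp
qed

lemma chain_discriminant_bounds:
  fixes v11 v21 w11 w21 x :: real
  assumes "w11 > 0" and "w21 > 0"
    and "4 * v11 + w11 > 0" and "4 * v21 + w21 > 0"
    and "v11 * v21 > 0"
  defines "s \<equiv> sqrt ((chain_c v11 w11 - chain_c v21 w21)^2 + 8 * v11 * v21 * (cos x + 1))"
  shows "\<bar>chain_c v11 w11 - chain_c v21 w21\<bar> \<le> s"
    and "s < chain_c v11 w11 + chain_c v21 w21"
proof -
  have c1: "chain_c v11 w11 > 2 * \<bar>v11\<bar>" and c2: "chain_c v21 w21 > 2 * \<bar>v21\<bar>"
    using assms chain_c_gt_abs by auto
  have "(2 * \<bar>v11\<bar>) * (2 * \<bar>v21\<bar>) < chain_c v11 w11 * chain_c v21 w21"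
    using c1 c2 by (intro mult_strict_mono) auto
  moreover have "\<bar>v11\<bar> * \<bar>v21\<bar> = v11 * v21"
    using assms(5) by (simp add: abs_mult[symmetric])
  ultimately have "4 * (v11 * v21) < chain_c v11 w11 * chain_c v21 w21" by simp
  moreover have "0 \<le> chain_c v11 w11 + chain_c v21 w21" using c1 c2 by linarith
  ultimately show "\<bar>chain_c v11 w11 - chain_c v21 w21\<bar> \<le> s"
    and "s < chain_c v11 w11 + chain_c v21 w21"
    using discriminant_root_bounds[of "v11 * v21" "chain_c v11 w11" "chain_c v21 w21" x]
      assms(5) unfolding s_def by (simp_all add: mult.assoc)
qed

lemma omega_plus_lower_bound:
  fixes v11 v21 w11 w21 x :: real
  assumes "w11 > 0" and "w21 > 0"
    and "4 * v11 + w11 > 0" and "4 * v21 + w21 > 0"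
    and "v11 * v21 > 0"
    and "chain_c v21 w21 > chain_c v11 w11"
  shows "sqrt (chain_c v21 w21) \<le> omega_plus v11 v21 w11 w21 x"
  using chain_discriminant_bounds(1)[OF assms(1-5), of x] assms(6)
  unfolding omega_plus_def Let_def by simp

lemma omega_upper_bounds:
  fixes v11 v21 w11 w21 x :: real
  assumes "w11 > 0" and "w21 > 0"
    and "4 * v11 + w11 > 0" and "4 * v21 + w21 > 0"
    and "v11 * v21 > 0"
  shows "omega_plus v11 v21 w11 w21 x < sqrt (chain_c v11 w11 + chain_c v21 w21)"
    and "omega_minus v11 v21 w11 w21 x < sqrt (chain_c v11 w11 + chain_c v21 w21)"
proof -
  note lower = chain_discriminant_bounds(1)[OF assms, of x]
  note upper = chain_discriminant_bounds(2)[OF assms, of x]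
  show "omega_plus v11 v21 w11 w21 x < sqrt (chain_c v11 w11 + chain_c v21 w21)"
    using upper unfolding omega_plus_def Let_def by simp
  show "omega_minus v11 v21 w11 w21 x < sqrt (chain_c v11 w11 + chain_c v21 w21)"
    using lower upper unfolding omega_minus_def Let_def by simp
qed

theorem mainTheorem1:
  fixes v11 v21 w11 w21 \<theta> :: real
  assumes "w11 > 0" and "w21 > 0"
    and "4 * v11 + w11 > 0" and "4 * v21 + w21 > 0"
    and "v11 * v21 > 0"
    and "chain_c v21 w21 > chain_c v11 w11"
    and "-pi < \<theta>" and "\<theta> \<le> pi"
  shows "2 * omega_plus v11 v21 w11 w21 \<theta> \<noteq> omega_minus v11 v21 w11 w21 (2 * \<theta>)
    \<and> 2 * omega_plus v11 v21 w11 w21 \<theta> \<noteq> omega_plus v11 v21 w11 w21 (2 * \<theta>)"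
proof -
  let ?c1 = "chain_c v11 w11" and ?c2 = "chain_c v21 w21"
  have "?c1 > 0" using chain_c_gt_abs[OF assms(1,3)] by linarith
  hence "sqrt (?c1 + ?c2) < sqrt (4 * ?c2)" using assms(6) by simp
  also have "\<dots> = 2 * sqrt ?c2" by (simp add: real_sqrt_mult)
  also have "\<dots> \<le> 2 * omega_plus v11 v21 w11 w21 \<theta>"
    using omega_plus_lower_bound[OF assms(1-6)] by simp
  finally have optical_large: "sqrt (?c1 + ?c2) < 2 * omega_plus v11 v21 w11 w21 \<theta>" .
  show ?thesis
    using optical_large omega_upper_bounds[OF assms(1-5), of "2 * \<theta>"] by auto
qed

end
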